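(* Every locally stable commutative ring $R$ is strongly completable; that is, for every $n\geq 2$ and all $a_1,\dots,a_n,d\in R$ with $a_1R+\cdots+a_nR=dR$, there exists an $n\times n$ matrix $A$ over $R$ whose first row is $(a_1,\dots,a_n)$ and with $\det(A)=d$.
   Context: All rings are commutative with identity. A ring $R$ has stable range 1 if whenever $a,b\in R$ with $aR+bR=R$, there exists $y\in R$ such that $a+by$ is a unit. A ring $R$ is locally stable if whenever $a,b\in R$ with $aR+bR=R$, there exists $y\in R$ such that $R/(a+by)R$ has stable range 1. *)

theory Defs
  imports "Jordan_Normal_Form.Determinant"
begin

definition stable_range_1 :: "'a::comm_ring_1 itself \<Rightarrow> bool" where
  "stable_range_1 _ \<longleftrightarrow>
     (\<forall>a b :: 'a. (\<exists>x y. a * x + b * y = 1) \<longrightarrow> (\<exists>y. a + b * y dvd 1))"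

text \<open>The quotient ring R/cR has stable range 1, written out in terms of
  representatives: ideals/units of R/cR are computed modulo c
  (u = v in R/cR iff c dvd u - v).\<close>
definition quotient_stable_range_1 :: "'a::comm_ring_1 \<Rightarrow> bool" where
  "quotient_stable_range_1 c \<longleftrightarrow>
     (\<forall>a b :: 'a. (\<exists>x y. c dvd (a * x + b * y - 1)) \<longrightarrow>
        (\<exists>y u. c dvd ((a + b * y) * u - 1)))"

definition locally_stable :: "'a::comm_ring_1 itself \<Rightarrow> bool" where
  "locally_stable _ \<longleftrightarrow>
     (\<forall>a b :: 'a. (\<exists>x y. a * x + b * y = 1) \<longrightarrow>
        (\<exists>y. quotient_stable_range_1 (a + b * y)))"

definition strongly_completable :: "'a::comm_ring_1 itself \<Rightarrow> bool" where
  "strongly_completable _ \<longleftrightarrow>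
     (\<forall>n \<ge> 2. \<forall>(a :: nat \<Rightarrow> 'a) d.
        {\<Sum>i<n. a i * x i | x. True} = {d * r | r. True} \<longrightarrow>
        (\<exists>A \<in> carrier_mat n n. (\<forall>j<n. A $$ (0, j) = a j) \<and> det A = d))"

end

theory Submission
  imports Defs
begin

text \<open>Write \<open>a j = d * b j\<close> and \<open>\<Sum>j<n. a j * x j = d\<close>. Then \<open>d\<close> kills
  \<open>e = 1 - \<Sum>j<n. b j * x j\<close>, so with \<open>r = \<Sum>j\<in>{2..<n}. b j * x j + e\<close> we get
  \<open>b 0 * x 0 + b 1 * x 1 + r = 1\<close> and \<open>d * r = \<Sum>j\<in>{2..<n}. a j * x j\<close>.
  Local stability applied to \<open>b 0\<close> and \<open>s = b 1 * x 1 + r\<close> yields \<open>w\<close> such that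
  \<open>R/QR\<close> has stable range 1 for \<open>Q = b 0 + s * w\<close>; there \<open>b 1\<close> and \<open>r\<close> are
  unimodular, so some \<open>P = b 1 + r * t\<close> satisfies \<open>P * u - Q * k = 1\<close>.
  The matrix with upper left block \<open>[[d * Q, d * P], [-u, -k]]\<close> and identity elsewhere
  has determinant \<open>d\<close>. Since every \<open>a j\<close> is a multiple of \<open>d\<close>, column operations
  make its first row \<open>(d * Q, d * P, a 2, \<dots>)\<close>, and as
  \<open>d * P = a 1 + t * \<Sum>j\<in>{2..<n}. a j * x j\<close> and
  \<open>d * Q = a 0 + w * \<Sum>j\<in>{1..<n}. a j * x j\<close>, two further column operations reach \<open>a\<close>.\<close>

definition completable :: "nat \<Rightarrow> (nat \<Rightarrow> 'a::comm_ring_1) \<Rightarrow> 'a \<Rightarrow> bool" where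
  "completable n v d \<longleftrightarrow> (\<exists>A \<in> carrier_mat n n. (\<forall>j<n. A $$ (0, j) = v j) \<and> det A = d)"

lemma completable_cong:
  assumes "completable n v d" and "\<And>j. j < n \<Longrightarrow> v j = v' j"
  shows "completable n v' d"
  using assms unfolding completable_def by auto

lemma det_unitriangular:
  assumes "U \<in> carrier_mat n n" and "\<And>i. i < n \<Longrightarrow> U $$ (i, i) = 1"
    and "(\<forall>i j. j < i \<longrightarrow> i < n \<longrightarrow> U $$ (i, j) = 0) \<or> (\<forall>i j. i < j \<longrightarrow> j < n \<longrightarrow> U $$ (i, j) = 0)"
  shows "det U = 1"
proof -
  have "det U = prod_list (diag_mat U)"
    using assms(1,3) det_upper_triangular[OF _ assms(1)] det_lower_triangular[OF _ assms(1)]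
    unfolding upper_triangular_def by auto
  also have "\<dots> = 1"
    unfolding prod_list_diag_prod using assms(1,2) by simp
  finally show ?thesis .
qed

text \<open>Right multiplication by the unitriangular matrix \<open>1 + (c k l)\<close>.\<close>
lemma completable_mult_unitriangular:
  assumes "completable n v d"
    and "(\<forall>k l. l \<le> k \<longrightarrow> c k l = 0) \<or> (\<forall>k l. k \<le> l \<longrightarrow> c k l = 0)"
  shows "completable n (\<lambda>l. v l + (\<Sum>k<n. v k * c k l)) d"
proof -
  obtain A where A: "A \<in> carrier_mat n n" and row: "\<forall>j<n. A $$ (0, j) = v j" and "det A = d"
    using assms(1) unfolding completable_def by blast
  define U where "U = mat n n (\<lambda>(k, l). (if k = l then 1 else 0) + c k l)"
  have U: "U \<in> carrier_mat n n"
    unfolding U_def by simp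
  have "det U = 1"
    by (rule det_unitriangular[OF U]) (use assms(2) in \<open>auto simp: U_def\<close>)
  with A U \<open>det A = d\<close> have "det (A * U) = d"
    by (simp add: det_mult)
  moreover have "(A * U) $$ (0, l) = v l + (\<Sum>k<n. v k * c k l)" if "l < n" for l
  proof -
    have "(A * U) $$ (0, l) = (\<Sum>k<n. v k * ((if k = l then 1 else 0) + c k l))"
      using A U row that by (auto simp: scalar_prod_def U_def atLeast0LessThan intro!: sum.cong)
    also have "\<dots> = v l + (\<Sum>k<n. v k * c k l)"
      using that by (simp add: distrib_left sum.distrib of_bool_def[symmetric])
    finally show ?thesis .
  qed
  ultimately show ?thesis
    unfolding completable_def using A U by (intro bexI[of _ "A * U"]) auto
qed

lemma completable_add_earlier_columns:
  assumes "completable n v d"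
  shows "completable n (\<lambda>l. v l + (\<Sum>k<l. v k * c k l)) d"
proof (rule completable_cong)
  show "completable n (\<lambda>l. v l + (\<Sum>k<n. v k * (if k < l then c k l else 0))) d"
    by (rule completable_mult_unitriangular[OF assms]) auto
  fix l assume "l < n"
  then have "{k. k < n \<and> k < l} = {..<l}"
    by auto
  then show "v l + (\<Sum>k<n. v k * (if k < l then c k l else 0)) = v l + (\<Sum>k<l. v k * c k l)"
    by (simp add: if_distrib[of "(*) _"] sum.inter_filter[symmetric] cong: if_cong)
qed

lemma completable_add_later_columns:
  assumes "completable n v d"
  shows "completable n (v(j := v j + (\<Sum>k\<in>{j<..<n}. v k * c k))) d"
proof (rule completable_cong)
  show "completable n (\<lambda>l. v l + (\<Sum>k<n. v k * (if l = j \<and> j < k then c k else 0))) d"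
    by (rule completable_mult_unitriangular[OF assms]) auto
  have "{k. k < n \<and> j < k} = {j<..<n}"
    by auto
  then show "v l + (\<Sum>k<n. v k * (if l = j \<and> j < k then c k else 0))
      = (v(j := v j + (\<Sum>k\<in>{j<..<n}. v k * c k))) l" for l
    by (simp add: if_distrib[of "(*) _"] sum.inter_filter[symmetric] cong: if_cong)
qed

definition corner_block_mat :: "nat \<Rightarrow> 'a \<Rightarrow> 'a \<Rightarrow> 'a \<Rightarrow> 'a \<Rightarrow> 'a::comm_ring_1 mat" where
  "corner_block_mat n p q r s = mat n n (\<lambda>(i, j).
     if i = 0 \<and> j = 0 then p else if i = 0 \<and> j = 1 then q
     else if i = 1 \<and> j = 0 then r else if i = 1 \<and> j = 1 then s
     else if i = j then 1 else 0)"

lemma det_corner_block_mat: "det (corner_block_mat (Suc (Suc m)) p q r s) = p * s - q * r"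
proof (induction m)
  case 0
  let ?A = "corner_block_mat 2 p q r s"
  have A: "?A \<in> carrier_mat 2 2"
    by (simp add: corner_block_mat_def)
  have "det ?A = (\<Sum>j<2. ?A $$ (0, j) * cofactor ?A 0 j)"
    by (rule laplace_expansion_row[OF A]) simp
  also have "\<dots> = ?A $$ (0, 0) * cofactor ?A 0 0 + ?A $$ (0, 1) * cofactor ?A 0 1"
    by (simp add: numeral_2_eq_2)
  also have "cofactor ?A 0 0 = s"
    unfolding cofactor_def by (subst det_single) (auto simp: mat_delete_def corner_block_mat_def)
  also have "cofactor ?A 0 1 = - r"
    unfolding cofactor_def by (subst det_single) (auto simp: mat_delete_def corner_block_mat_def)
  finally show ?case
    by (simp add: corner_block_mat_def numeral_2_eq_2)
next
  case (Suc m)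
  let ?k = "Suc (Suc m)"
  let ?A = "corner_block_mat (Suc ?k) p q r s"
  have A: "?A \<in> carrier_mat (Suc ?k) (Suc ?k)"
    by (simp add: corner_block_mat_def)
  have "det ?A = (\<Sum>j<Suc ?k. ?A $$ (?k, j) * cofactor ?A ?k j)"
    by (rule laplace_expansion_row[OF A]) simp
  also have "\<dots> = ?A $$ (?k, ?k) * cofactor ?A ?k ?k + (\<Sum>j<?k. ?A $$ (?k, j) * cofactor ?A ?k j)"
    by (simp only: sum.lessThan_Suc add.commute)
  also have "(\<Sum>j<?k. ?A $$ (?k, j) * cofactor ?A ?k j) = 0"
    by (rule sum.neutral) (auto simp: corner_block_mat_def)
  also have "mat_delete ?A ?k ?k = corner_block_mat ?k p q r s"
    by (rule eq_matI) (auto simp: mat_delete_def corner_block_mat_def)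
  then have "cofactor ?A ?k ?k = p * s - q * r"
    unfolding cofactor_def using Suc.IH by simp
  finally show ?case
    by (simp add: corner_block_mat_def)
qed

lemma completable_two_entries:
  assumes "2 \<le> n"
  shows "completable n (\<lambda>j. if j = 0 then p else if j = 1 then q else 0) (p * s - q * r)"
proof -
  obtain m where n: "n = Suc (Suc m)"
    using assms by (metis add_2_eq_Suc le_Suc_ex)
  show ?thesis
    unfolding completable_def using det_corner_block_mat[of m p q r s]
    by (intro bexI[of _ "corner_block_mat n p q r s"]) (auto simp: n corner_block_mat_def)
qed

lemma sum_lessThan_split_two:
  assumes "2 \<le> (n::nat)"
  shows "(\<Sum>k<n. f k) = f 0 + f 1 + (\<Sum>k\<in>{2..<n}. f k)"
  using assms by (simp add: atLeast0LessThan[symmetric] sum.atLeast_Suc_lessThan numeral_2_eq_2 add.assoc)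

lemma completable_pair_and_multiples:
  assumes n: "2 \<le> n" and ab: "\<And>j. 2 \<le> j \<Longrightarrow> j < n \<Longrightarrow> a j = (q * u - p * k) * b j"
  shows "completable n (\<lambda>j. if j = 0 then p else if j = 1 then q else a j) (q * u - p * k)"
proof -
  define v where "v = (\<lambda>j::nat. if j = 0 then p else if j = 1 then q else 0)"
  have "completable n v (p * - k - q * - u)"
    unfolding v_def by (rule completable_two_entries[OF n])
  then have "completable n v (q * u - p * k)"
    by (simp add: algebra_simps)
  then have "completable n
      (\<lambda>l. v l + (\<Sum>i<l. v i * (if 2 \<le> l then (if i = 0 then - k * b l else u * b l) else 0)))
      (q * u - p * k)"
    by (rule completable_add_earlier_columns)
  then show ?thesis
  proof (rule completable_cong)
    fix l assume "l < n"
    show "v l + (\<Sum>i<l. v i * (if 2 \<le> l then (if i = 0 then - k * b l else u * b l) else 0))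
        = (if l = 0 then p else if l = 1 then q else a l)"
    proof (cases "2 \<le> l")
      case True
      then have "(\<Sum>i<l. v i * (if i = 0 then - k * b l else u * b l)) = b l * (q * u - p * k)"
        by (simp add: sum_lessThan_split_two v_def algebra_simps)
      with True \<open>l < n\<close> show ?thesis
        by (simp add: v_def ab mult.commute)
    qed (auto simp: v_def)
  qed
qed

lemma completable_of_reduction:
  assumes n: "2 \<le> n" and ab: "\<And>j. 2 \<le> j \<Longrightarrow> j < n \<Longrightarrow> a j = d * b j"
    and reduction: "(a 1 + t * (\<Sum>j\<in>{2..<n}. a j * x j)) * u
                    - (a 0 + w * (\<Sum>j\<in>{1..<n}. a j * x j)) * k = d"
  shows "completable n a d"
proof -
  define \<alpha> where "\<alpha> = a 0 + w * (\<Sum>j\<in>{1..<n}. a j * x j)"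
  define \<beta> where "\<beta> = a 1 + t * (\<Sum>j\<in>{2..<n}. a j * x j)"
  define v1 where "v1 = (\<lambda>j. if j = 0 then \<alpha> else if j = 1 then \<beta> else a j)"
  define v2 where "v2 = v1(1 := a 1)"
  have d: "\<beta> * u - \<alpha> * k = d"
    using reduction by (simp add: \<alpha>_def \<beta>_def)
  have "completable n v1 d"
    unfolding v1_def d[symmetric] by (rule completable_pair_and_multiples[OF n]) (simp add: ab d)
  then have "completable n (v1(1 := v1 1 + (\<Sum>i\<in>{1<..<n}. v1 i * - (t * x i)))) d"
    by (rule completable_add_later_columns)
  moreover have "{1<..<n} = {2..<n}"
    by auto
  ultimately have "completable n v2 d"
    by (simp add: v2_def v1_def \<beta>_def sum_negf sum_distrib_left algebra_simps)
  then have "completable n (v2(0 := v2 0 + (\<Sum>i\<in>{0<..<n}. v2 i * - (w * x i)))) d"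
    by (rule completable_add_later_columns)
  then show ?thesis
  proof (rule completable_cong)
    have "{0<..<n} = {1..<n}"
      by auto
    then have "(\<Sum>i\<in>{0<..<n}. v2 i * - (w * x i)) = - w * (\<Sum>i\<in>{1..<n}. a i * x i)"
      by (auto simp: sum_distrib_left v2_def v1_def algebra_simps intro!: sum.cong)
    then show "(v2(0 := v2 0 + (\<Sum>i\<in>{0<..<n}. v2 i * - (w * x i)))) j = a j" for j
      by (simp add: v2_def v1_def \<alpha>_def)
  qed
qed

lemma locally_stable_elementary_reduction:
  fixes b0 b1 r x0 x1 :: "'a::comm_ring_1"
  assumes "locally_stable TYPE('a)" and unimodular: "b0 * x0 + b1 * x1 + r = 1"
  shows "\<exists>w t u k. (b1 + r * t) * u - (b0 + (b1 * x1 + r) * w) * k = 1"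
proof -
  define s where "s = b1 * x1 + r"
  obtain w where "quotient_stable_range_1 (b0 + s * w)"
    using assms unfolding locally_stable_def s_def by (metis add.assoc mult_1_right)
  moreover define Q where "Q = b0 + s * w"
  text \<open>Modulo \<open>Q\<close> we have \<open>s * (1 - w * x0) = 1\<close>, so \<open>b1\<close> and \<open>r\<close> are unimodular in \<open>R/QR\<close>.\<close>
  have "b1 * (x1 * (1 - w * x0)) + r * (1 - w * x0) - 1 = Q * - x0"
    using unimodular by (simp add: Q_def s_def algebra_simps)
  then have "Q dvd b1 * (x1 * (1 - w * x0)) + r * (1 - w * x0) - 1"
    by (metis dvd_triv_left)
  ultimately obtain t u where "Q dvd (b1 + r * t) * u - 1"
    unfolding quotient_stable_range_1_def Q_def by blast
  then obtain k where "(b1 + r * t) * u - 1 = Q * k"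
    by (auto simp: dvd_def)
  then have "(b1 + r * t) * u - (b0 + s * w) * k = 1"
    by (simp add: Q_def algebra_simps)
  then show ?thesis
    unfolding s_def by blast
qed

lemma locally_stable_reduction:
  fixes a b x :: "nat \<Rightarrow> 'a::comm_ring_1"
  assumes "locally_stable TYPE('a)" and n: "2 \<le> n"
    and ab: "\<And>j. j < n \<Longrightarrow> a j = d * b j" and ax: "(\<Sum>j<n. a j * x j) = d"
  shows "\<exists>w t u k. (a 1 + t * (\<Sum>j\<in>{2..<n}. a j * x j)) * u
                   - (a 0 + w * (\<Sum>j\<in>{1..<n}. a j * x j)) * k = d"
proof -
  have scale: "d * (\<Sum>j\<in>S. b j * x j) = (\<Sum>j\<in>S. a j * x j)" if "S \<subseteq> {..<n}" for S
    unfolding sum_distrib_left using that by (auto simp: ab mult.assoc intro!: sum.cong)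
  define e where "e = 1 - (\<Sum>j<n. b j * x j)"
  have de: "d * e = 0"
    using scale[of "{..<n}"] ax by (simp add: e_def algebra_simps)
  define r where "r = (\<Sum>j\<in>{2..<n}. b j * x j) + e"
  have "b 0 * x 0 + b 1 * x 1 + r = 1"
    using n by (simp add: r_def e_def sum_lessThan_split_two)
  then obtain w t u k where wtuk: "(b 1 + r * t) * u - (b 0 + (b 1 * x 1 + r) * w) * k = 1"
    using locally_stable_elementary_reduction[OF assms(1)] by blast
  have "d * r = d * (\<Sum>j\<in>{2..<n}. b j * x j)"
    using de by (simp add: r_def distrib_left)
  also have "\<dots> = (\<Sum>j\<in>{2..<n}. a j * x j)"
    by (rule scale) auto
  finally have dr: "d * r = (\<Sum>j\<in>{2..<n}. a j * x j)" .
  have "d * (b 1 * x 1 + r) = a 1 * x 1 + (\<Sum>j\<in>{2..<n}. a j * x j)"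
    using dr n by (simp add: ab distrib_left mult.assoc)
  also have "\<dots> = (\<Sum>j\<in>{1..<n}. a j * x j)"
    using n by (simp add: sum.atLeast_Suc_lessThan numeral_2_eq_2)
  finally have ds: "d * (b 1 * x 1 + r) = (\<Sum>j\<in>{1..<n}. a j * x j)" .
  have "d = d * ((b 1 + r * t) * u - (b 0 + (b 1 * x 1 + r) * w) * k)"
    using wtuk by simp
  also have "\<dots> = (d * b 1 + t * (d * r)) * u - (d * b 0 + w * (d * (b 1 * x 1 + r))) * k"
    by (simp add: algebra_simps)
  also have "\<dots> = (a 1 + t * (\<Sum>j\<in>{2..<n}. a j * x j)) * u
                   - (a 0 + w * (\<Sum>j\<in>{1..<n}. a j * x j)) * k"
    using n by (simp only: ab[of 0] ab[of 1] dr ds)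
  finally show ?thesis
    by metis
qed

lemma principal_span_generators:
  fixes a :: "nat \<Rightarrow> 'a::comm_ring_1"
  assumes "{\<Sum>i<n. a i * x i | x. True} = {d * r | r. True}"
  obtains x b where "(\<Sum>i<n. a i * x i) = d" and "\<And>j. j < n \<Longrightarrow> a j = d * b j"
proof -
  have "d \<in> {d * r | r. True}"
    by (metis (mono_tags) mem_Collect_eq mult_1_right)
  then have "d \<in> {\<Sum>i<n. a i * x i | x. True}"
    unfolding assms .
  then obtain x where "(\<Sum>i<n. a i * x i) = d"
    by auto
  moreover have "\<exists>r. a j = d * r" if "j < n" for j
  proof -
    have "(\<Sum>i<n. a i * (if i = j then 1 else 0)) = a j"
      using that by (simp add: of_bool_def[symmetric])
    then have "a j \<in> {\<Sum>i<n. a i * x i | x. True}"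
      by (auto intro!: exI[of _ "\<lambda>i. if i = j then 1 else 0"])
    with assms show ?thesis
      by auto
  qed
  then obtain b where "\<And>j. j < n \<Longrightarrow> a j = d * b j"
    by metis
  ultimately show ?thesis
    using that by blast
qed

theorem theorem4p1:
  assumes "locally_stable TYPE('a::comm_ring_1)"
  shows "strongly_completable TYPE('a)"
  unfolding strongly_completable_def
proof (intro allI impI)
  fix n :: nat and a :: "nat \<Rightarrow> 'a" and d :: 'a
  assume n: "2 \<le> n" and span: "{\<Sum>i<n. a i * x i | x. True} = {d * r | r. True}"
  obtain x b where "(\<Sum>i<n. a i * x i) = d" and ab: "\<And>j. j < n \<Longrightarrow> a j = d * b j"
    using principal_span_generators[OF span] by blast
  then obtain w t u k where "(a 1 + t * (\<Sum>j\<in>{2..<n}. a j * x j)) * u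
                   - (a 0 + w * (\<Sum>j\<in>{1..<n}. a j * x j)) * k = d"
    using locally_stable_reduction[OF assms n] by blast
  then have "completable n a d"
    using completable_of_reduction[OF n] ab by blast
  then show "\<exists>A \<in> carrier_mat n n. (\<forall>j<n. A $$ (0, j) = a j) \<and> det A = d"
    unfolding completable_def .
qed

end
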